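(* Let $n,k$ be positive integers with $n\ge 3k$, and let $\mathcal F\subset\binom{[n]}{k}$ be an intersecting family with $|\mathcal F|\le \binom{n-1}{k-1}/(2k)$. Then $$|\mathcal D(\mathcal F)|\le\sum_{0\le \ell<k}\binom{n-1}{\ell}.$$
   Context: $[n]=\{1,\dots,n\}$; $\binom{[n]}{k}$ is the family of all $k$-element subsets of $[n]$. A family $\mathcal F$ is intersecting if $F\cap F'\neq\varnothing$ for all $F,F'\in\mathcal F$. $\mathcal D(\mathcal F):=\{F\setminus F' : F,F'\in\mathcal F\}$. *)

theory Defs
  imports Complex_Main
begin

definition intersecting :: "'a set set \<Rightarrow> bool" where
  "intersecting \<F> \<longleftrightarrow> (\<forall>F\<in>\<F>. \<forall>F'\<in>\<F>. F \<inter> F' \<noteq> {})"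

definition diff_family :: "'a set set \<Rightarrow> 'a set set" where
  "diff_family \<F> = {F - F' | F F'. F \<in> \<F> \<and> F' \<in> \<F>}"

end

theory Submission
  imports Defs
begin

text \<open>For intersecting \<open>\<F>\<close>, every difference \<open>F - F'\<close> is a proper subset of the \<open>k\<close>-set
  \<open>F\<close>. Those of size \<open>k - 1\<close> lie in the shadow of \<open>\<F>\<close>, which has at most \<open>k |\<F>|\<close> members;
  the smaller ones number at most \<open>\<Sum>l<k-1. C(n,l)\<close>. By Pascal's rule this sum equals
  \<open>\<Sum>l<k-1. C(n-1,l) + \<Sum>l<k-2. C(n-1,l)\<close>. For \<open>n \<ge> 3k\<close> the coefficients \<open>C(n-1,l)\<close>,
  \<open>l < k\<close>, at least double from one \<open>l\<close> to the next, so the second sum is at most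
  \<open>C(n-1,k-1)/2\<close>, and the hypothesis on \<open>|\<F>|\<close> bounds \<open>k |\<F>|\<close> by the same quantity.\<close>

definition shadow :: "'a set set \<Rightarrow> 'a set set" where
  "shadow \<F> = {F - {x} | F x. F \<in> \<F> \<and> x \<in> F}"

lemma card_shadow_le:
  assumes "finite \<F>" and "\<And>F. F \<in> \<F> \<Longrightarrow> card F = k"
  shows "card (shadow \<F>) \<le> k * card \<F>"
proof -
  have "shadow \<F> = (\<Union>F\<in>\<F>. (\<lambda>x. F - {x}) ` F)"
    unfolding shadow_def by blast
  then have "card (shadow \<F>) \<le> (\<Sum>F\<in>\<F>. card ((\<lambda>x. F - {x}) ` F))"
    using card_UN_le[OF assms(1)] by simp
  also have "\<dots> = (\<Sum>F\<in>\<F>. card F)"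
    by (intro sum.cong refl card_image inj_onI) blast
  also have "\<dots> = k * card \<F>"
    using assms(2) by simp
  finally show ?thesis .
qed

lemma card_small_subsets_le:
  assumes "finite U"
  shows "card {G. G \<subseteq> U \<and> card G < m} \<le> (\<Sum>l<m. card U choose l)"
proof -
  have "{G. G \<subseteq> U \<and> card G < m} = (\<Union>l<m. {G. G \<subseteq> U \<and> card G = l})"
    by blast
  then have "card {G. G \<subseteq> U \<and> card G < m} \<le> (\<Sum>l<m. card {G. G \<subseteq> U \<and> card G = l})"
    using card_UN_le[of "{..<m}"] by simp
  also have "\<dots> = (\<Sum>l<m. card U choose l)"
    using assms by (simp add: n_subsets)
  finally show ?thesis .
qed

lemma diff_family_subset_small_Un_shadow:
  assumes "intersecting \<F>" and "\<And>F. F \<in> \<F> \<Longrightarrow> F \<subseteq> U \<and> card F = k"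
    and "finite U"
  shows "diff_family \<F> \<subseteq> {G. G \<subseteq> U \<and> card G < k - 1} \<union> shadow \<F>"
proof
  fix D assume "D \<in> diff_family \<F>"
  then obtain F F' where D: "D = F - F'" and F: "F \<in> \<F>" and F': "F' \<in> \<F>"
    unfolding diff_family_def by blast
  have FU: "F \<subseteq> U" and cardF: "card F = k"
    using assms(2)[OF F] by auto
  have finF: "finite F"
    using FU assms(3) finite_subset by blast
  have "F \<inter> F' \<noteq> {}"
    using assms(1) F F' unfolding intersecting_def by blast
  then have psub: "D \<subset> F"
    using D by blast
  then have "card D < k"
    using psubset_card_mono[OF finF] cardF by simp
  then consider "card D < k - 1" | "card D = k - 1"
    by linarith
  then show "D \<in> {G. G \<subseteq> U \<and> card G < k - 1} \<union> shadow \<F>"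
  proof cases
    case 1
    then show ?thesis using psub FU by auto
  next
    case 2
    have "card (F - D) = 1"
      using card_Diff_subset[of D F] psub finF 2 cardF \<open>card D < k\<close>
      by (simp add: finite_subset less_imp_le)
    then obtain x where x: "F - D = {x}"
      by (auto simp: card_Suc_eq)
    then have "D = F - {x}" and "x \<in> F"
      using psub by blast+
    then show ?thesis
      using F unfolding shadow_def by blast
  qed
qed

lemma sum_lessThan_choose_Suc:
  "(\<Sum>l<Suc m. Suc N choose l) = (\<Sum>l<Suc m. N choose l) + (\<Sum>l<m. N choose l)"
  by (induction m) auto

lemma double_choose_le_choose_Suc:
  assumes "3 * j + 2 \<le> N"
  shows "2 * (N choose j) \<le> N choose Suc j"
proof -
  have "Suc j * (N choose Suc j) = (N - j) * (N choose j)"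
    using binomial_absorption[of j N] binomial_absorb_comp[of N j] by simp
  moreover have "Suc j * (2 * (N choose j)) \<le> (N - j) * (N choose j)"
    using mult_right_mono[of "2 * Suc j" "N - j" "N choose j"] assms
    by (simp add: algebra_simps)
  ultimately show ?thesis
    by (metis mult_le_cancel1 zero_less_Suc)
qed

lemma sum_lessThan_choose_le_choose:
  assumes "3 * m \<le> N"
  shows "(\<Sum>l<m. N choose l) \<le> N choose m"
  using assms
proof (induction m)
  case 0
  then show ?case by simp
next
  case (Suc m)
  have "(\<Sum>l<Suc m. N choose l) \<le> 2 * (N choose m)"
    using Suc by simp
  also have "\<dots> \<le> N choose Suc m"
    using Suc.prems by (intro double_choose_le_choose_Suc) simp
  finally show ?case .
qed

lemma sum_choose_Suc_add_le:
  assumes "3 * k \<le> Suc N" and "2 * x \<le> N choose (k - 1)"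
  shows "(\<Sum>l<k - 1. Suc N choose l) + x \<le> (\<Sum>l<k. N choose l)"
proof (cases "k \<le> 1")
  case True
  then show ?thesis using assms(2) by (cases k) auto
next
  case False
  define p where "p = k - 2"
  with False have k: "k = Suc (Suc p)"
    by simp
  have "(\<Sum>l<p. N choose l) \<le> N choose p"
    using assms(1) k by (intro sum_lessThan_choose_le_choose) simp
  moreover have "2 * (N choose p) \<le> N choose Suc p"
    using assms(1) k by (intro double_choose_le_choose_Suc) simp
  ultimately have tail: "(\<Sum>l<p. N choose l) + x \<le> N choose Suc p"
    using assms(2) k by simp
  have "(\<Sum>l<k - 1. Suc N choose l) + x = (\<Sum>l<Suc p. N choose l) + ((\<Sum>l<p. N choose l) + x)"
    using k sum_lessThan_choose_Suc[where m = p and N = N] by simp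
  also have "\<dots> \<le> (\<Sum>l<Suc p. N choose l) + (N choose Suc p)"
    using tail by simp
  also have "\<dots> = (\<Sum>l<k. N choose l)"
    using k by simp
  finally show ?thesis .
qed

theorem mainTheorem3:
  fixes n k :: nat and \<F> :: "nat set set"
  assumes "k \<ge> 1" and "n \<ge> 3 * k"
    and "\<F> \<subseteq> {A. A \<subseteq> {1..n} \<and> card A = k}"
    and "intersecting \<F>"
    and "real (card \<F>) \<le> real ((n - 1) choose (k - 1)) / (2 * real k)"
  shows "card (diff_family \<F>) \<le> (\<Sum>l<k. (n - 1) choose l)"
proof -
  let ?small = "{G. G \<subseteq> {1..n} \<and> card G < k - 1}"
  have fin_small: "finite ?small"
    by (rule finite_subset[of _ "Pow {1..n}"]) auto
  have "finite \<F>"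
    by (rule finite_subset[OF assms(3)]) (auto intro: finite_subset[of _ "Pow {1..n}"])
  have "shadow \<F> \<subseteq> Pow {1..n}"
    using assms(3) unfolding shadow_def by blast
  then have "finite (shadow \<F>)"
    by (rule finite_subset) simp
  moreover have "diff_family \<F> \<subseteq> ?small \<union> shadow \<F>"
    using assms(3) by (intro diff_family_subset_small_Un_shadow[OF assms(4)]) auto
  ultimately have "card (diff_family \<F>) \<le> card (?small \<union> shadow \<F>)"
    using fin_small by (intro card_mono) auto
  also have "\<dots> \<le> (\<Sum>l<k - 1. n choose l) + k * card \<F>"
    using card_Un_le[of ?small "shadow \<F>"] card_small_subsets_le[of "{1..n}" "k - 1"]
      card_shadow_le[OF \<open>finite \<F>\<close>, of k] assms(3) by force
  also have "\<dots> \<le> (\<Sum>l<k. (n - 1) choose l)"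
  proof -
    have "real (2 * (k * card \<F>)) \<le> real ((n - 1) choose (k - 1))"
      using assms(1,5) by (simp add: field_simps)
    then show ?thesis
      using sum_choose_Suc_add_le[of k "n - 1" "k * card \<F>"] assms(1,2)
      by (simp only: of_nat_le_iff) (simp add: Suc_pred')
  qed
  finally show ?thesis .
qed

end
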